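(* Let $A$ and $B$ be output types of system $\mathcal F$. Then $A\wedge B$, $A\vee B$ and $LA$ are output types.
   Context: $\lambda$-terms are those of the untyped $\lambda$-calculus; $Fv(t)$ the free variables; normal means without $\beta$-redex. Types of system $\mathcal F$: built from type variables and type constants (atomic, not quantifiable; $O$ is one) with $\rightarrow$, $\forall$; only proper types (in every $\forall XA$, $X$ occurs free in $A$). Typing: (ax) $\Gamma \vdash x_i : A_i$ for $x_i:A_i\in\Gamma$; ($\rightarrow_i$) from $\Gamma, x:B \vdash t : C$ infer $\Gamma \vdash \lambda x t : B \rightarrow C$; ($\rightarrow_e$) from $\Gamma \vdash u : B\rightarrow C$, $\Gamma \vdash v : B$ infer $\Gamma \vdash (u)v : C$; ($\forall_i$) from $\Gamma \vdash t : A$, $X$ not free in $\Gamma$, infer $\Gamma \vdash t : \forall X A$; ($\forall_e$) from $\Gamma \vdash t : \forall X A$ infer $\Gamma \vdash t : A[C/X]$. An output type is a closed type $S$ not containing $O$ such that for every normal $t$ and variable $\alpha$, $\alpha:O\vdash_{\mathcal F}t:S$ implies $\alpha\notin Fv(t)$. With $X$ a type variable not free in $A,B$: $A\wedge B=\forall X\{(A\rightarrow(B\rightarrow X))\rightarrow X\}$, $A\vee B=\forall X\{(A\rightarrow X)\rightarrow((B\rightarrow X)\rightarrow X)\}$, $LA=\forall X\{X\rightarrow[(A\rightarrow(X\rightarrow X))\rightarrow X]\}$. *)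

theory Defs
  imports Main
begin

datatype trm = Var nat | Lam nat trm | App trm trm

fun Fv :: "trm \<Rightarrow> nat set" where
  "Fv (Var x) = {x}"
| "Fv (Lam x t) = Fv t - {x}"
| "Fv (App u v) = Fv u \<union> Fv v"

fun normal :: "trm \<Rightarrow> bool" where
  "normal (Var x) = True"
| "normal (Lam x t) = normal t"
| "normal (App u v) = ((\<forall>x t. u \<noteq> Lam x t) \<and> normal u \<and> normal v)"

datatype ty = TVar nat | TConst nat | Arr ty ty | All ty

definition tyO :: ty where "tyO = TConst 0"

fun lift :: "nat \<Rightarrow> ty \<Rightarrow> ty" where
  "lift k (TVar i) = (if i < k then TVar i else TVar (Suc i))"
| "lift k (TConst c) = TConst c"
| "lift k (Arr A B) = Arr (lift k A) (lift k B)"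
| "lift k (All A) = All (lift (Suc k) A)"

fun tsubst :: "nat \<Rightarrow> ty \<Rightarrow> ty \<Rightarrow> ty" where
  "tsubst k C (TVar i) = (if i < k then TVar i else if i = k then C else TVar (i - 1))"
| "tsubst k C (TConst c) = TConst c"
| "tsubst k C (Arr A B) = Arr (tsubst k C A) (tsubst k C B)"
| "tsubst k C (All A) = All (tsubst (Suc k) (lift 0 C) A)"

fun ftv :: "ty \<Rightarrow> nat set" where
  "ftv (TVar i) = {i}"
| "ftv (TConst c) = {}"
| "ftv (Arr A B) = ftv A \<union> ftv B"
| "ftv (All A) = (\<lambda>i. i - 1) ` (ftv A - {0})"

fun proper :: "ty \<Rightarrow> bool" where
  "proper (TVar i) = True"
| "proper (TConst c) = True"
| "proper (Arr A B) = (proper A \<and> proper B)"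
| "proper (All A) = (0 \<in> ftv A \<and> proper A)"

definition closed_ty :: "ty \<Rightarrow> bool" where "closed_ty A \<longleftrightarrow> ftv A = {}"

fun containsO :: "ty \<Rightarrow> bool" where
  "containsO (TVar i) = False"
| "containsO (TConst c) = (TConst c = tyO)"
| "containsO (Arr A B) = (containsO A \<or> containsO B)"
| "containsO (All A) = containsO A"

type_synonym ctx = "nat \<Rightarrow> ty option"

text \<open>Rule (forall_i) "X not free in Gamma" is rendered de Bruijn style: the body is
typed in the context with all free type indices shifted.\<close>
inductive ftyping :: "ctx \<Rightarrow> trm \<Rightarrow> ty \<Rightarrow> bool" where
  ax: "\<Gamma> x = Some A \<Longrightarrow> ftyping \<Gamma> (Var x) A"
| arr_i: "proper B \<Longrightarrow> ftyping (\<Gamma>(x \<mapsto> B)) t C \<Longrightarrow> ftyping \<Gamma> (Lam x t) (Arr B C)"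
| arr_e: "ftyping \<Gamma> u (Arr B C) \<Longrightarrow> ftyping \<Gamma> v B \<Longrightarrow> ftyping \<Gamma> (App u v) C"
| all_i: "ftyping (map_option (lift 0) \<circ> \<Gamma>) t A \<Longrightarrow> 0 \<in> ftv A \<Longrightarrow> ftyping \<Gamma> t (All A)"
| all_e: "ftyping \<Gamma> t (All A) \<Longrightarrow> proper C \<Longrightarrow> ftyping \<Gamma> t (tsubst 0 C A)"

definition output_type :: "ty \<Rightarrow> bool" where
  "output_type S \<longleftrightarrow> proper S \<and> closed_ty S \<and> \<not> containsO S \<and>
     (\<forall>t \<alpha>. normal t \<longrightarrow> ftyping [\<alpha> \<mapsto> tyO] t S \<longrightarrow> \<alpha> \<notin> Fv t)"

section \<open>Connectives (X = bound index 0, A and B lifted past the binder)\<close>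

definition tand :: "ty \<Rightarrow> ty \<Rightarrow> ty" where
  "tand A B = All (Arr (Arr (lift 0 A) (Arr (lift 0 B) (TVar 0))) (TVar 0))"

definition tor :: "ty \<Rightarrow> ty \<Rightarrow> ty" where
  "tor A B = All (Arr (Arr (lift 0 A) (TVar 0)) (Arr (Arr (lift 0 B) (TVar 0)) (TVar 0)))"

definition tlist :: "ty \<Rightarrow> ty" where
  "tlist A = All (Arr (TVar 0) (Arr (Arr (lift 0 A) (Arr (TVar 0) (TVar 0))) (TVar 0)))"

end

theory Submission
  imports Defs
begin

text \<open>A normal term of type \<open>\<forall>X. (A \<rightarrow> B \<rightarrow> X) \<rightarrow> X\<close> in the context \<open>\<alpha> : O\<close> is
  \<open>\<lambda>f. f a b\<close>; similarly the normal inhabitants of the other two types have the forms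
  \<open>\<lambda>g h. g a\<close>, \<open>\<lambda>g h. h b\<close> and \<open>\<lambda>x c. c a\<^sub>1 (c a\<^sub>2 (\<dots> x))\<close>. Instantiating \<open>X\<close> by a constant
  other than \<open>O\<close> shows that \<open>\<alpha>\<close> is not a head variable, so it can only occur inside an
  argument \<open>a\<close> of output type, typed in a context where every variable has a type
  \<open>A\<^sub>1 \<rightarrow> \<dots> \<rightarrow> A\<^sub>k \<rightarrow> O\<close>. Replacing each such variable, applied to \<open>n\<close> arguments, by
  \<open>k - n\<close> vacuous abstractions over a fresh variable \<open>b : O\<close> gives a normal term of the same
  output type in the context \<open>b : O\<close>, and it contains \<open>b\<close> if \<open>a\<close> contains \<open>\<alpha>\<close>.\<close>

section \<open>Lifting and substitution of types\<close>

lemma lift_lift: "i \<le> k \<Longrightarrow> lift (Suc k) (lift i A) = lift i (lift k A)"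
  by (induct A arbitrary: i k) auto

lemma lift_tsubst: "i \<le> j \<Longrightarrow> lift i (tsubst j C A) = tsubst (Suc j) (lift i C) (lift i A)"
  by (induct A arbitrary: i j C) (auto simp: lift_lift)

lemma tsubst_lift [simp]: "tsubst k C (lift k A) = A"
  by (induct A arbitrary: k C) simp_all

lemma tsubst_tsubst:
  "i \<le> j \<Longrightarrow> tsubst i (tsubst j D C) (tsubst (Suc j) (lift i D) A) = tsubst j D (tsubst i C A)"
  by (induct A arbitrary: i j C D)
    (simp_all add: diff_Suc lift_lift[symmetric] lift_tsubst split: nat.split)

lemma lift_closed: "\<forall>i\<in>ftv A. i < k \<Longrightarrow> lift k A = A"
proof (induct A arbitrary: k)
  case (All A)
  have "\<forall>i\<in>ftv A. i < Suc k"
  proof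
    fix i assume "i \<in> ftv A"
    then show "i < Suc k" using All.prems by (cases i) force+
  qed
  then show ?case using All by simp
qed auto

lemma lift_closed_ty: "closed_ty A \<Longrightarrow> lift k A = A"
  by (simp add: closed_ty_def lift_closed)

lemma tsubst_closed_ty: "closed_ty A \<Longrightarrow> tsubst k C A = A"
  by (metis lift_closed_ty tsubst_lift)

lemma ftv_lift_less: "i < k \<Longrightarrow> i \<in> ftv A \<Longrightarrow> i \<in> ftv (lift k A)"
proof (induct A arbitrary: i k)
  case (All A)
  then have "Suc i \<in> ftv A" by (auto, metis Suc_pred neq0_conv)
  then have "Suc i \<in> ftv (lift (Suc k) A)" using All by simp
  then show ?case by force
qed auto

lemma ftv_tsubst_less: "i < k \<Longrightarrow> i \<in> ftv A \<Longrightarrow> i \<in> ftv (tsubst k C A)"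
proof (induct A arbitrary: i k C)
  case (All A)
  then have "Suc i \<in> ftv A" by (auto, metis Suc_pred neq0_conv)
  then have "Suc i \<in> ftv (tsubst (Suc k) (lift 0 C) A)" using All by simp
  then show ?case by force
qed auto

lemma proper_lift: "proper A \<Longrightarrow> proper (lift k A)"
  by (induct A arbitrary: k) (auto intro: ftv_lift_less)

lemma proper_tsubst: "proper A \<Longrightarrow> proper C \<Longrightarrow> proper (tsubst k C A)"
  by (induct A arbitrary: k C) (auto intro: ftv_tsubst_less proper_lift)

section \<open>Type substitution in typings and inversion for abstractions\<close>

lemma ftyping_tsubst:
  assumes "ftyping \<Gamma> t T" "proper C"
  shows "ftyping (map_option (tsubst k C) \<circ> \<Gamma>) t (tsubst k C T)"
  using assms
proof (induction arbitrary: k C rule: ftyping.induct)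
  case (ax \<Gamma> x A)
  then show ?case by (auto intro: ftyping.ax)
next
  case (arr_i B \<Gamma> x t D)
  have "map_option (tsubst k C) \<circ> \<Gamma>(x \<mapsto> B) = (map_option (tsubst k C) \<circ> \<Gamma>)(x \<mapsto> tsubst k C B)"
    by (auto simp: fun_eq_iff)
  moreover have "ftyping (map_option (tsubst k C) \<circ> \<Gamma>(x \<mapsto> B)) t (tsubst k C D)"
    using arr_i.IH arr_i.prems by blast
  ultimately have "ftyping ((map_option (tsubst k C) \<circ> \<Gamma>)(x \<mapsto> tsubst k C B)) t (tsubst k C D)"
    by simp
  then show ?case
    by (simp only: tsubst.simps) (rule ftyping.arr_i[OF proper_tsubst[OF arr_i(1) arr_i.prems]])
next
  case (arr_e \<Gamma> u B D v)
  then show ?case by (metis ftyping.arr_e tsubst.simps(3))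
next
  case (all_i \<Gamma> t A)
  have "map_option (tsubst (Suc k) (lift 0 C)) \<circ> (map_option (lift 0) \<circ> \<Gamma>)
     = map_option (lift 0) \<circ> (map_option (tsubst k C) \<circ> \<Gamma>)"
    by (auto simp: fun_eq_iff option.map_comp lift_tsubst comp_def intro!: option.map_cong)
  moreover have "proper (lift 0 C)" using all_i.prems by (rule proper_lift)
  ultimately
  have "ftyping (map_option (lift 0) \<circ> (map_option (tsubst k C) \<circ> \<Gamma>)) t (tsubst (Suc k) (lift 0 C) A)"
    using all_i.IH by metis
  moreover have "0 \<in> ftv (tsubst (Suc k) (lift 0 C) A)"
    using all_i by (simp add: ftv_tsubst_less)
  ultimately have "ftyping (map_option (tsubst k C) \<circ> \<Gamma>) t (All (tsubst (Suc k) (lift 0 C) A))"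
    by (rule ftyping.all_i)
  then show ?case by (simp add: comp_def)
next
  case (all_e \<Gamma> t A D)
  then have "ftyping (map_option (tsubst k C) \<circ> \<Gamma>) t (All (tsubst (Suc k) (lift 0 C) A))"
    by (simp add: comp_def)
  from ftyping.all_e[OF this proper_tsubst[OF all_e(2) all_e(4), where k=k]]
  show ?case using tsubst_tsubst[of 0 k C D A] by (simp add: comp_def)
qed

lemma tsubst_All_funpow:
  "tsubst k C ((All ^^ m) A) = (All ^^ m) (tsubst (m + k) ((lift 0 ^^ m) C) A)"
proof (induct m arbitrary: k C)
  case (Suc m)
  have "(lift 0 ^^ m) (lift 0 C) = (lift 0 ^^ Suc m) C"
    by (simp only: funpow_Suc_right o_apply)
  then show ?case using Suc[of "Suc k" "lift 0 C"] by simp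
qed simp

lemma funpow_lift_lift: "(lift 0 ^^ m) (lift 0 A) = lift m ((lift 0 ^^ m) A)"
  by (induct m) (simp_all add: lift_lift[of 0, symmetric])

lemma proper_funpow_lift: "proper A \<Longrightarrow> proper ((lift 0 ^^ m) A)"
  by (induct m) (simp_all add: proper_lift)

lemma tsubst_funpow_lift: "tsubst m C ((lift 0 ^^ Suc m) A) = (lift 0 ^^ m) A"
  by (simp only: funpow_Suc_right o_apply funpow_lift_lift tsubst_lift)

text \<open>Every typing of an abstraction is an \<open>\<rightarrow>\<close>-introduction followed by \<open>\<forall>\<close>-rules; the
  \<open>\<forall>\<close>-eliminations can be pushed into the body by type substitution.\<close>

lemma ftyping_Lam_inv:
  assumes "ftyping \<Gamma> s T" "s = Lam x t"
  shows "\<exists>n P Q. T = (All ^^ n) (Arr P Q) \<and> ftyping ((map_option (lift 0 ^^ n) \<circ> \<Gamma>)(x \<mapsto> P)) t Q"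
  using assms
proof (induction rule: ftyping.induct)
  case (arr_i B \<Gamma> x' t' C)
  then show ?case by (intro exI[of _ 0]) (auto simp: option.map_ident fun_upd_def)
next
  case (all_i \<Gamma> t' A)
  then obtain n P Q where A: "A = (All ^^ n) (Arr P Q)"
    and ty: "ftyping ((map_option (lift 0 ^^ n) \<circ> (map_option (lift 0) \<circ> \<Gamma>))(x \<mapsto> P)) t Q"
    by blast
  have "map_option (lift 0 ^^ n) \<circ> (map_option (lift 0) \<circ> \<Gamma>) = map_option (lift 0 ^^ Suc n) \<circ> \<Gamma>"
    by (simp add: fun_eq_iff option.map_comp funpow_Suc_right del: funpow.simps)
  with ty have "ftyping ((map_option (lift 0 ^^ Suc n) \<circ> \<Gamma>)(x \<mapsto> P)) t Q" by simp
  moreover have "All A = (All ^^ Suc n) (Arr P Q)" using A by simp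
  ultimately show ?case by blast
next
  case (all_e \<Gamma> t' A C)
  then obtain n P Q where A: "All A = (All ^^ n) (Arr P Q)"
    and ty: "ftyping ((map_option (lift 0 ^^ n) \<circ> \<Gamma>)(x \<mapsto> P)) t Q"
    by blast
  obtain m where n: "n = Suc m" using A by (cases n) auto
  define C' where "C' = (lift 0 ^^ m) C"
  have "proper C'" unfolding C'_def using all_e by (simp add: proper_funpow_lift)
  from ftyping_tsubst[OF ty[unfolded n] this, of m]
  have "ftyping (map_option (tsubst m C') \<circ> ((map_option (lift 0 ^^ Suc m) \<circ> \<Gamma>)(x \<mapsto> P))) t (tsubst m C' Q)" .
  moreover have "map_option (tsubst m C') \<circ> ((map_option (lift 0 ^^ Suc m) \<circ> \<Gamma>)(x \<mapsto> P))
     = (map_option (lift 0 ^^ m) \<circ> \<Gamma>)(x \<mapsto> tsubst m C' P)"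
    by (auto simp: fun_eq_iff option.map_comp tsubst_funpow_lift comp_def intro!: option.map_cong
             simp del: funpow.simps)
  ultimately have "ftyping ((map_option (lift 0 ^^ m) \<circ> \<Gamma>)(x \<mapsto> tsubst m C' P)) t (tsubst m C' Q)"
    by simp
  moreover have "tsubst 0 C A = (All ^^ m) (Arr (tsubst m C' P) (tsubst m C' Q))"
    using tsubst_All_funpow[of 0 C m "Arr P Q"] A n C'_def by simp
  ultimately show ?case by blast
qed auto

lemma ftyping_Lam_All_inv:
  assumes "ftyping \<Gamma> (Lam x t) (All (Arr P Q))" "proper C"
  shows "ftyping (\<Gamma>(x \<mapsto> tsubst 0 C P)) t (tsubst 0 C Q)"
proof -
  obtain n P' Q' where e: "All (Arr P Q) = (All ^^ n) (Arr P' Q')"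
    and ty: "ftyping ((map_option (lift 0 ^^ n) \<circ> \<Gamma>)(x \<mapsto> P')) t Q'"
    using ftyping_Lam_inv[OF assms(1)] by blast
  have "n = 1" using e by (cases n; cases "n - 1") auto
  with e ty have "ftyping ((map_option (lift 0) \<circ> \<Gamma>)(x \<mapsto> P)) t Q" by simp
  from ftyping_tsubst[OF this assms(2), of 0]
  have "ftyping (map_option (tsubst 0 C) \<circ> ((map_option (lift 0) \<circ> \<Gamma>)(x \<mapsto> P))) t (tsubst 0 C Q)" .
  moreover have "map_option (tsubst 0 C) \<circ> ((map_option (lift 0) \<circ> \<Gamma>)(x \<mapsto> P)) = \<Gamma>(x \<mapsto> tsubst 0 C P)"
    by (auto simp: fun_eq_iff option.map_comp comp_def option.map_ident)
  ultimately show ?thesis by simp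
qed

lemma ftyping_Lam_Arr_inv:
  assumes "ftyping \<Gamma> (Lam x t) (Arr P Q)"
  shows "ftyping (\<Gamma>(x \<mapsto> P)) t Q"
proof -
  obtain n P' Q' where e: "Arr P Q = (All ^^ n) (Arr P' Q')"
    and ty: "ftyping ((map_option (lift 0 ^^ n) \<circ> \<Gamma>)(x \<mapsto> P')) t Q'"
    using ftyping_Lam_inv[OF assms(1)] by blast
  have "n = 0" using e by (cases n) auto
  with e ty show ?thesis by (simp add: option.map_id0)
qed

lemma ftyping_Lam_TConst: "\<not> ftyping \<Gamma> (Lam x t) (TConst c)"
proof
  assume "ftyping \<Gamma> (Lam x t) (TConst c)"
  then obtain n P Q where "TConst c = (All ^^ n) (Arr P Q)"
    using ftyping_Lam_inv by blast
  then show False by (cases n) auto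
qed

fun head :: "trm \<Rightarrow> trm" where
  "head (App u v) = head u"
| "head (Var x) = Var x"
| "head (Lam x t) = Lam x t"

fun args :: "trm \<Rightarrow> trm list" where
  "args (App u v) = args u @ [v]"
| "args (Var x) = []"
| "args (Lam x t) = []"

fun arrs :: "ty list \<Rightarrow> ty \<Rightarrow> ty" where
  "arrs [] R = R"
| "arrs (A # As) R = Arr A (arrs As R)"

lemma closed_ty_arrs: "closed_ty (arrs As R) \<longleftrightarrow> (\<forall>A\<in>set As. closed_ty A) \<and> closed_ty R"
  by (induct As) (auto simp: closed_ty_def)

lemma closed_ty_tyO [simp]: "closed_ty tyO"
  by (simp add: closed_ty_def tyO_def)

lemma proper_tyO [simp]: "proper tyO"
  by (simp add: tyO_def)

lemma arrs_TConst_neq_All: "arrs As (TConst c) \<noteq> All E"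
  by (cases As) auto

text \<open>A closed head type ending in a constant is untouched by \<open>\<forall>\<close>-introductions and cannot be
  instantiated, so a typing of \<open>x a\<^sub>1 \<dots> a\<^sub>n\<close> is just a chain of \<open>\<rightarrow>\<close>-eliminations.\<close>

lemma ftyping_spine:
  assumes "ftyping \<Gamma> s T"
  shows "head s = Var x \<Longrightarrow> \<Gamma> x = Some (arrs As (TConst c)) \<Longrightarrow> closed_ty (arrs As (TConst c)) \<Longrightarrow>
    length (args s) \<le> length As \<and> T = arrs (drop (length (args s)) As) (TConst c) \<and>
    (\<forall>i<length (args s). ftyping \<Gamma> (args s ! i) (As ! i))"
  using assms
proof (induction rule: ftyping.induct)
  case (arr_e \<Gamma> u B C v)
  define m where "m = length (args u)"
  from arr_e have IH: "m \<le> length As" "Arr B C = arrs (drop m As) (TConst c)"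
    "\<forall>i<m. ftyping \<Gamma> (args u ! i) (As ! i)" by (auto simp: m_def)
  obtain E Es where dr: "drop m As = E # Es" using IH(2) by (cases "drop m As") auto
  then have ml: "m < length As" by (metis drop_all list.distinct(1) not_le)
  from Cons_nth_drop_Suc[OF ml] dr have "As ! m = E" "drop (Suc m) As = Es" by auto
  moreover have "B = E" "C = arrs Es (TConst c)" using IH(2) dr by auto
  ultimately show ?case using IH ml arr_e.hyps(2)
    by (auto simp: m_def[symmetric] nth_append less_Suc_eq)
next
  case (all_i \<Gamma> t A)
  have "(map_option (lift 0) \<circ> \<Gamma>) x = Some (arrs As (TConst c))"
    using all_i.prems by (simp add: lift_closed_ty)
  then have "A = arrs (drop (length (args t)) As) (TConst c)" using all_i by blast
  then have "closed_ty A"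
    using all_i.prems(3) set_drop_subset[of "length (args t)" As] by (auto simp: closed_ty_arrs)
  then show ?case using all_i by (auto simp: closed_ty_def)
next
  case (all_e \<Gamma> t A C)
  then show ?case using arrs_TConst_neq_All by metis
qed auto

lemma ftyping_head_TConst:
  "ftyping \<Gamma> s T \<Longrightarrow> head s = Var y \<Longrightarrow> \<Gamma> y = Some (TConst c) \<Longrightarrow> T = TConst c \<and> args s = []"
  using ftyping_spine[of \<Gamma> s T y "[]" c] by (simp add: closed_ty_def)

lemma ftyping_head_bound: "ftyping \<Gamma> s T \<Longrightarrow> head s = Var x \<Longrightarrow> \<Gamma> x \<noteq> None"
  by (induction rule: ftyping.induct) auto

lemma normal_head_Var: "normal s \<Longrightarrow> \<forall>y t. s \<noteq> Lam y t \<Longrightarrow> \<exists>x. head s = Var x"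
  by (induct s) auto

lemma Fv_head_args: "Fv s = Fv (head s) \<union> (\<Union>a\<in>set (args s). Fv a)"
  by (induct s) auto

lemma normal_args: "normal s \<Longrightarrow> a \<in> set (args s) \<Longrightarrow> normal a"
  by (induct s) auto

lemma size_args_less: "a \<in> set (args s) \<Longrightarrow> size a < size s"
  by (induct s) auto

section \<open>Collapsing variables onto one variable of type \<open>O\<close>\<close>

fun vars :: "trm \<Rightarrow> nat set" where
  "vars (Var x) = {x}"
| "vars (Lam x t) = insert x (vars t)"
| "vars (App u v) = vars u \<union> vars v"

lemma finite_vars: "finite (vars t)"
  by (induct t) auto

fun vac_lams :: "nat \<Rightarrow> nat \<Rightarrow> trm" where
  "vac_lams 0 b = Var b"
| "vac_lams (Suc k) b = Lam (Suc b) (vac_lams k b)"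

lemma ftyping_vac_lams:
  "\<Gamma> b = Some tyO \<Longrightarrow> \<forall>A\<in>set As. proper A \<Longrightarrow> ftyping \<Gamma> (vac_lams (length As) b) (arrs As tyO)"
proof (induct As arbitrary: \<Gamma>)
  case Nil
  then show ?case by (auto intro: ftyping.ax)
next
  case (Cons A As)
  then have "ftyping (\<Gamma>(Suc b \<mapsto> A)) (vac_lams (length As) b) (arrs As tyO)" by auto
  with Cons.prems show ?case by (auto intro: ftyping.arr_i)
qed

lemma Fv_vac_lams: "Fv (vac_lams k b) = {b}"
  by (induct k) auto

lemma normal_vac_lams: "normal (vac_lams k b)"
  by (induct k) auto

definition head_arity :: "(nat \<Rightarrow> nat option) \<Rightarrow> trm \<Rightarrow> nat option" where
  "head_arity \<rho> u = (case head u of Var x \<Rightarrow> \<rho> x | _ \<Rightarrow> None)"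

text \<open>If \<open>\<rho> x = Some k\<close>, the variable \<open>x\<close> stands for one of type \<open>A\<^sub>1 \<rightarrow> \<dots> \<rightarrow> A\<^sub>k \<rightarrow> O\<close>;
  a maximal application of \<open>x\<close> to \<open>n\<close> arguments is replaced by \<open>\<lambda>\<dots>\<lambda>. b\<close> with \<open>k - n\<close> vacuous
  abstractions, a term of the same type in the context \<open>b : O\<close>.\<close>

fun collapse :: "(nat \<Rightarrow> nat option) \<Rightarrow> nat \<Rightarrow> trm \<Rightarrow> trm" where
  "collapse \<rho> b (Var x) = (case \<rho> x of Some k \<Rightarrow> vac_lams k b | None \<Rightarrow> Var x)"
| "collapse \<rho> b (Lam x t) = Lam x (collapse (\<rho>(x := None)) b t)"
| "collapse \<rho> b (App u v) = (case head_arity \<rho> u of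
      Some k \<Rightarrow> vac_lams (k - Suc (length (args u))) b
    | None \<Rightarrow> App (collapse \<rho> b u) (collapse \<rho> b v))"

lemma ftyping_collapse:
  assumes "ftyping \<Gamma> t D"
  shows "b \<notin> vars t \<Longrightarrow>
    (\<forall>x k. \<rho> x = Some k \<longrightarrow> (\<exists>As. \<Gamma> x = Some (arrs As tyO) \<and> length As = k \<and>
        (\<forall>A\<in>set As. closed_ty A \<and> proper A))) \<Longrightarrow>
    \<Gamma>' b = Some tyO \<Longrightarrow> (\<forall>x. x \<noteq> b \<longrightarrow> \<rho> x = None \<longrightarrow> \<Gamma>' x = \<Gamma> x) \<Longrightarrow>
    ftyping \<Gamma>' (collapse \<rho> b t) D"
  using assms
proof (induction arbitrary: \<rho> \<Gamma>' rule: ftyping.induct)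
  case (ax \<Gamma> x A \<rho> \<Gamma>')
  show ?case
  proof (cases "\<rho> x")
    case None
    then show ?thesis using ax by (auto intro: ftyping.ax)
  next
    case (Some k)
    then obtain As where "\<Gamma> x = Some (arrs As tyO)" "length As = k" "\<forall>A\<in>set As. proper A"
      using ax by blast
    then show ?thesis using ax Some ftyping_vac_lams[of \<Gamma>' b As] by auto
  qed
next
  case (arr_i B \<Gamma> x t C \<rho> \<Gamma>')
  have "ftyping (\<Gamma>'(x \<mapsto> B)) (collapse (\<rho>(x := None)) b t) C"
    by (rule arr_i.IH) (use arr_i.prems in auto)
  then show ?case using arr_i by (auto intro: ftyping.arr_i)
next
  case (arr_e \<Gamma> u B C v \<rho> \<Gamma>')
  show ?case
  proof (cases "head_arity \<rho> u")
    case None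
    have "ftyping \<Gamma>' (collapse \<rho> b u) (Arr B C)" "ftyping \<Gamma>' (collapse \<rho> b v) B"
      using arr_e by auto
    then show ?thesis using None by (auto intro: ftyping.arr_e)
  next
    case (Some k)
    then obtain y where y: "head u = Var y" "\<rho> y = Some k"
      unfolding head_arity_def by (auto split: trm.splits)
    then obtain As where As: "\<Gamma> y = Some (arrs As tyO)" "length As = k"
      "\<forall>A\<in>set As. closed_ty A \<and> proper A"
      using arr_e.prems by blast
    have "closed_ty (arrs As tyO)" using As(3) by (simp add: closed_ty_arrs)
    define m where "m = length (args u)"
    have "Arr B C = arrs (drop m As) tyO"
      using ftyping_spine[OF arr_e.hyps(1) y(1), of As 0] As(1) \<open>closed_ty (arrs As tyO)\<close>
      unfolding m_def tyO_def by blast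
    then obtain Es where Es: "drop (Suc m) As = Es" "C = arrs Es tyO"
      by (cases "drop m As") (auto simp: tyO_def drop_Suc tl_drop[symmetric])
    moreover have "\<forall>A\<in>set Es. proper A" using As(3) Es(1) by (auto dest: in_set_dropD)
    ultimately have "ftyping \<Gamma>' (vac_lams (length Es) b) C"
      using ftyping_vac_lams[of \<Gamma>' b Es] arr_e.prems(3) by simp
    moreover have "length Es = k - Suc m" using Es(1) As(2) by auto
    ultimately show ?thesis using Some by (simp add: m_def)
  qed
next
  case (all_i \<Gamma> t A \<rho> \<Gamma>')
  have "ftyping (map_option (lift 0) \<circ> \<Gamma>') (collapse \<rho> b t) A"
  proof (rule all_i.IH)
    show "\<forall>x k. \<rho> x = Some k \<longrightarrow> (\<exists>As. (map_option (lift 0) \<circ> \<Gamma>) x = Some (arrs As tyO) \<and>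
        length As = k \<and> (\<forall>A\<in>set As. closed_ty A \<and> proper A))"
      using all_i.prems(2)
      by (fastforce simp: lift_closed_ty closed_ty_arrs)
  qed (use all_i.prems in \<open>auto simp: tyO_def\<close>)
  then show ?case using all_i by (auto intro: ftyping.all_i)
next
  case (all_e \<Gamma> t A C \<rho> \<Gamma>')
  then show ?case by (auto intro: ftyping.all_e)
qed

lemma collapse_Lam: "collapse \<rho> b u = Lam y s \<Longrightarrow> (\<exists>x t. u = Lam x t) \<or> head_arity \<rho> u \<noteq> None"
  by (cases u) (auto simp: head_arity_def split: option.splits)

lemma normal_collapse: "normal t \<Longrightarrow> normal (collapse \<rho> b t)"
proof (induct t arbitrary: \<rho>)
  case (App u v)
  then show ?case
    by (cases "head_arity \<rho> u") (fastforce simp: normal_vac_lams dest: collapse_Lam)+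
qed (auto simp: normal_vac_lams split: option.splits)

lemma Fv_collapse: "\<rho> x = Some k \<Longrightarrow> x \<in> Fv t \<Longrightarrow> b \<notin> vars t \<Longrightarrow> b \<in> Fv (collapse \<rho> b t)"
  by (induct t arbitrary: \<rho>) (auto simp: Fv_vac_lams split: option.splits)

definition O_ctx :: "(nat \<Rightarrow> ty list option) \<Rightarrow> ctx" where
  "O_ctx \<Phi> = map_option (\<lambda>As. arrs As tyO) \<circ> \<Phi>"

definition closed_proper_sig :: "(nat \<Rightarrow> ty list option) \<Rightarrow> bool" where
  "closed_proper_sig \<Phi> \<longleftrightarrow> (\<forall>x As. \<Phi> x = Some As \<longrightarrow> (\<forall>A\<in>set As. closed_ty A \<and> proper A))"

lemma O_ctx_empty [simp]: "O_ctx Map.empty = Map.empty"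
  by (simp add: O_ctx_def fun_eq_iff)

lemma O_ctx_upd [simp]: "O_ctx (\<Phi>(x \<mapsto> As)) = (O_ctx \<Phi>)(x \<mapsto> arrs As tyO)"
  by (simp add: O_ctx_def fun_eq_iff)

lemma closed_proper_sig_empty: "closed_proper_sig Map.empty"
  by (simp add: closed_proper_sig_def)

lemma closed_proper_sig_upd:
  "closed_proper_sig \<Phi> \<Longrightarrow> \<forall>A\<in>set As. closed_ty A \<and> proper A \<Longrightarrow> closed_proper_sig (\<Phi>(x \<mapsto> As))"
  by (simp add: closed_proper_sig_def)

lemma O_ctx_Some:
  assumes "\<Phi> y = Some As" "closed_proper_sig \<Phi>"
  shows "O_ctx \<Phi> y = Some (arrs As (TConst 0)) \<and> closed_ty (arrs As (TConst 0))"
  using assms by (auto simp: O_ctx_def tyO_def[symmetric] closed_ty_arrs closed_proper_sig_def)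

text \<open>Collapsing every variable of \<open>\<Phi>\<close> onto a fresh \<open>b : O\<close> turns an occurrence of \<open>\<alpha>\<close> into
  one of \<open>b\<close>, which the output type \<open>A\<close> forbids.\<close>

lemma output_type_not_free:
  assumes "output_type A" "normal u" "ftyping (O_ctx \<Phi>) u A" "\<Phi> \<alpha> = Some []"
    "closed_proper_sig \<Phi>"
  shows "\<alpha> \<notin> Fv u"
proof
  assume \<alpha>: "\<alpha> \<in> Fv u"
  obtain b where b: "b \<notin> vars u"
    using finite_vars ex_new_if_finite infinite_UNIV_nat by blast
  define \<rho> where "\<rho> = map_option length \<circ> \<Phi>"
  have "ftyping [b \<mapsto> tyO] (collapse \<rho> b u) A"
    by (rule ftyping_collapse[OF assms(3) b])
      (use assms(5) in \<open>auto simp: \<rho>_def O_ctx_def closed_proper_sig_def\<close>)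
  moreover have "normal (collapse \<rho> b u)" using normal_collapse assms(2) by blast
  ultimately have "b \<notin> Fv (collapse \<rho> b u)" using assms(1) unfolding output_type_def by blast
  moreover have "\<rho> \<alpha> = Some 0" using assms(4) by (simp add: \<rho>_def)
  ultimately show False using Fv_collapse \<alpha> b by blast
qed

lemma not_free_if_head_args_output:
  assumes "normal s" "ftyping (O_ctx \<Phi>) s T" "head s = Var y" "y \<noteq> \<alpha>" "\<Phi> \<alpha> = Some []"
    "\<Phi> y = Some As" "\<forall>A\<in>set As. output_type A" "closed_proper_sig \<Phi>"
  shows "\<alpha> \<notin> Fv s"
proof -
  from ftyping_spine[OF assms(2,3), of As 0] O_ctx_Some[OF assms(6,8)]
  have len: "length (args s) \<le> length As"
    and arg_types: "\<forall>i<length (args s). ftyping (O_ctx \<Phi>) (args s ! i) (As ! i)"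
    by auto
  have "\<alpha> \<notin> Fv a" if a: "a \<in> set (args s)" for a
  proof -
    obtain i where i: "i < length (args s)" "a = args s ! i" using a by (auto simp: in_set_conv_nth)
    have "As ! i \<in> set As" using len i by simp
    with assms(7) have "output_type (As ! i)" ..
    then show ?thesis
      using output_type_not_free normal_args[OF assms(1) a] arg_types i assms(5,8) by blast
  qed
  then show ?thesis using Fv_head_args[of s] assms(3,4) by auto
qed

text \<open>Typing \<open>s\<close> also at a constant other than \<open>O\<close> rules out the variable \<open>\<alpha> : O\<close> as its head.\<close>

lemma not_free_if_typed_by_other_const:
  assumes "normal s" "ftyping \<Gamma> s (TConst k)" "TConst k \<noteq> tyO" "\<Gamma> \<alpha> = Some tyO"
    "ftyping (O_ctx \<Phi>) s tyO" "\<Phi> \<alpha> = Some []" "closed_proper_sig \<Phi>"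
    "\<forall>y As. y \<noteq> \<alpha> \<longrightarrow> \<Phi> y = Some As \<longrightarrow> (\<forall>A\<in>set As. output_type A)"
  shows "\<alpha> \<notin> Fv s"
proof -
  have "\<forall>y t. s \<noteq> Lam y t" using assms(2) ftyping_Lam_TConst by blast
  then obtain y where y: "head s = Var y" using normal_head_Var assms(1) by blast
  have "y \<noteq> \<alpha>"
  proof
    assume "y = \<alpha>"
    with assms(4) have "\<Gamma> y = Some (TConst 0)" by (simp add: tyO_def)
    from ftyping_head_TConst[OF assms(2) y this] assms(3) show False by (simp add: tyO_def)
  qed
  moreover obtain As where "\<Phi> y = Some As"
    using ftyping_head_bound[OF assms(5) y] by (auto simp: O_ctx_def)
  ultimately show ?thesis using not_free_if_head_args_output[OF assms(1,5) y] assms(6-8) by blast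
qed

section \<open>The connectives\<close>

lemma output_typeI:
  assumes "\<And>t \<alpha>. normal t \<Longrightarrow> ftyping [\<alpha> \<mapsto> tyO] t S \<Longrightarrow> \<alpha> \<notin> Fv t"
    and "proper S" "closed_ty S" "\<not> containsO S"
  shows "output_type S"
  using assms unfolding output_type_def by blast

lemma output_typeD: "output_type S \<Longrightarrow> proper S \<and> closed_ty S \<and> \<not> containsO S"
  by (simp add: output_type_def)

lemma normal_typing_All_Arr:
  assumes "normal t" "ftyping [\<alpha> \<mapsto> tyO] t (All (Arr P Q))"
  obtains x t' where "t = Lam x t'" "normal t'"
    "\<And>C. proper C \<Longrightarrow> ftyping ([\<alpha> \<mapsto> tyO](x \<mapsto> tsubst 0 C P)) t' (tsubst 0 C Q)"
proof -
  have "\<exists>x t'. t = Lam x t'"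
  proof (rule ccontr)
    assume "\<nexists>x t'. t = Lam x t'"
    then obtain y where y: "head t = Var y" using normal_head_Var assms(1) by blast
    then have "[\<alpha> \<mapsto> tyO] y = Some (TConst 0)"
      using ftyping_head_bound[OF assms(2)] by (auto simp: tyO_def split: if_splits)
    from ftyping_head_TConst[OF assms(2) y this] show False by simp
  qed
  then show ?thesis using that assms ftyping_Lam_All_inv by auto
qed

lemma normal_typing_Arr_is_Lam:
  assumes "normal t" "ftyping (O_ctx \<Phi>) t (Arr P Q)" "closed_proper_sig \<Phi>" "containsO P"
    "\<forall>x As. \<Phi> x = Some As \<longrightarrow> (\<forall>A\<in>set As. \<not> containsO A)"
  shows "\<exists>x t'. t = Lam x t'"
proof (rule ccontr)
  assume "\<nexists>x t'. t = Lam x t'"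
  then obtain y where y: "head t = Var y" using normal_head_Var assms(1) by blast
  then obtain As where As: "\<Phi> y = Some As"
    using ftyping_head_bound[OF assms(2)] by (auto simp: O_ctx_def)
  from ftyping_spine[OF assms(2) y] O_ctx_Some[OF As assms(3)]
  have "Arr P Q = arrs (drop (length (args t)) As) (TConst 0)" by blast
  then obtain Es where "drop (length (args t)) As = P # Es"
    by (cases "drop (length (args t)) As") auto
  then have "P \<in> set As" by (metis in_set_dropD list.set_intros(1))
  then show False using assms(4,5) As by blast
qed

lemma output_type_tand:
  assumes A: "output_type A" and B: "output_type B"
  shows "output_type (tand A B)"
proof -
  have T: "tand A B = All (Arr (Arr A (Arr B (TVar 0))) (TVar 0))"
    using A B by (simp add: tand_def lift_closed_ty output_typeD)
  have "\<alpha> \<notin> Fv t" if "normal t" "ftyping [\<alpha> \<mapsto> tyO] t (tand A B)" for t \<alpha>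
  proof -
    from that obtain f s where t: "t = Lam f s" "normal s"
      and s0: "\<And>C. proper C \<Longrightarrow>
        ftyping ([\<alpha> \<mapsto> tyO](f \<mapsto> tsubst 0 C (Arr A (Arr B (TVar 0))))) s (tsubst 0 C (TVar 0))"
      unfolding T by (rule normal_typing_All_Arr) blast
    have s: "\<And>C. proper C \<Longrightarrow> ftyping ([\<alpha> \<mapsto> tyO](f \<mapsto> Arr A (Arr B C))) s C"
      using s0 output_typeD[OF A] output_typeD[OF B] by (simp add: tsubst_closed_ty)
    show ?thesis
    proof (cases "f = \<alpha>")
      case False
      let ?\<Phi> = "[\<alpha> \<mapsto> [], f \<mapsto> [A, B]]"
      have "closed_proper_sig ?\<Phi>"
        using output_typeD[OF A] output_typeD[OF B]
        by (simp add: closed_proper_sig_empty closed_proper_sig_upd)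
      then have "\<alpha> \<notin> Fv s"
        using not_free_if_typed_by_other_const[OF t(2) s[of "TConst 1"], of \<alpha> ?\<Phi>] s[of tyO] False A B
        by (auto simp: tyO_def)
      then show ?thesis using t by simp
    qed (simp add: t)
  qed
  moreover have "proper (tand A B)"
    "closed_ty (tand A B)"
    "\<not> containsO (tand A B)"
    using output_typeD[OF A] output_typeD[OF B] by (auto simp: T closed_ty_def tyO_def)
  ultimately show ?thesis by (rule output_typeI)
qed

lemma output_type_tor:
  assumes A: "output_type A" and B: "output_type B"
  shows "output_type (tor A B)"
proof -
  have T: "tor A B = All (Arr (Arr A (TVar 0)) (Arr (Arr B (TVar 0)) (TVar 0)))"
    using A B by (simp add: tor_def lift_closed_ty output_typeD)
  have "\<alpha> \<notin> Fv t" if "normal t" "ftyping [\<alpha> \<mapsto> tyO] t (tor A B)" for t \<alpha>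
  proof -
    from that obtain g t1 where t: "t = Lam g t1" "normal t1"
      and t1_0: "\<And>C. proper C \<Longrightarrow> ftyping ([\<alpha> \<mapsto> tyO](g \<mapsto> tsubst 0 C (Arr A (TVar 0)))) t1
        (tsubst 0 C (Arr (Arr B (TVar 0)) (TVar 0)))"
      unfolding T by (rule normal_typing_All_Arr) blast
    have t1: "\<And>C. proper C \<Longrightarrow> ftyping ([\<alpha> \<mapsto> tyO](g \<mapsto> Arr A C)) t1 (Arr (Arr B C) C)"
      using t1_0 output_typeD[OF A] output_typeD[OF B] by (simp add: tsubst_closed_ty)
    show ?thesis
    proof (cases "g = \<alpha>")
      case False
      let ?\<Phi> = "[\<alpha> \<mapsto> [], g \<mapsto> [A]]"
      have "closed_proper_sig ?\<Phi>"
        using output_typeD[OF A] by (simp add: closed_proper_sig_empty closed_proper_sig_upd)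
      moreover have "\<forall>y As. ?\<Phi> y = Some As \<longrightarrow> (\<forall>A\<in>set As. \<not> containsO A)"
        using output_typeD[OF A] by simp
      ultimately obtain h t2 where t2: "t1 = Lam h t2"
        using normal_typing_Arr_is_Lam[OF t(2), of ?\<Phi> "Arr B tyO" tyO] t1[of tyO]
        by (auto simp: tyO_def)
      have t2_ty: "\<And>C. proper C \<Longrightarrow> ftyping ([\<alpha> \<mapsto> tyO](g \<mapsto> Arr A C, h \<mapsto> Arr B C)) t2 C"
        using t1 ftyping_Lam_Arr_inv unfolding t2 by blast
      show ?thesis
      proof (cases "h = \<alpha>")
        case False2: False
        let ?\<Psi> = "[\<alpha> \<mapsto> [], g \<mapsto> [A], h \<mapsto> [B]]"
        have "normal t2" using t(2) t2 by simp
        moreover have "closed_proper_sig ?\<Psi>"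
          using output_typeD[OF A] output_typeD[OF B]
          by (simp add: closed_proper_sig_empty closed_proper_sig_upd)
        ultimately have "\<alpha> \<notin> Fv t2"
          using not_free_if_typed_by_other_const[OF _ t2_ty[of "TConst 1"], of \<alpha> ?\<Psi>] t2_ty[of tyO]
            False False2 A B
          by (auto simp: tyO_def)
        then show ?thesis using t t2 by simp
      qed (simp add: t t2)
    qed (simp add: t)
  qed
  moreover have "proper (tor A B)"
    "closed_ty (tor A B)"
    "\<not> containsO (tor A B)"
    using output_typeD[OF A] output_typeD[OF B] by (auto simp: T closed_ty_def tyO_def)
  ultimately show ?thesis by (rule output_typeI)
qed

lemma tlist_body_not_free:
  assumes A: "output_type A" and "\<alpha> \<noteq> x" "\<alpha> \<noteq> c" "TConst k \<noteq> tyO"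
  defines "\<Gamma> \<equiv> [\<alpha> \<mapsto> tyO](x \<mapsto> TConst k, c \<mapsto> Arr A (Arr (TConst k) (TConst k)))"
    and "\<Phi> \<equiv> [\<alpha> \<mapsto> [], x \<mapsto> [], c \<mapsto> [A, tyO]]"
  shows "normal s \<Longrightarrow> ftyping \<Gamma> s (TConst k) \<Longrightarrow> ftyping (O_ctx \<Phi>) s tyO \<Longrightarrow> \<alpha> \<notin> Fv s"
proof (induction s rule: measure_induct_rule[of size])
  case (less s)
  have sig: "closed_proper_sig \<Phi>" "\<Phi> \<alpha> = Some []"
    using output_typeD[OF A] assms(2,3)
    by (simp_all add: \<Phi>_def closed_proper_sig_empty closed_proper_sig_upd)
  have "\<forall>y u. s \<noteq> Lam y u" using less.prems(2) ftyping_Lam_TConst by blast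
  then obtain y where y: "head s = Var y" using normal_head_Var less.prems(1) by blast
  show ?case
  proof (cases "y = c")
    case False
    then obtain k' where k': "\<Gamma> y = Some (TConst k')"
      using ftyping_head_bound[OF less.prems(2) y] by (auto simp: \<Gamma>_def tyO_def split: if_splits)
    from ftyping_head_TConst[OF less.prems(2) y this] have "args s = []" "y \<noteq> \<alpha>"
      using assms(2-4) k' by (auto simp: \<Gamma>_def tyO_def)
    then show ?thesis using Fv_head_args[of s] y by simp
  next
    case True
    have "\<Gamma> y = Some (arrs [A, TConst k] (TConst k))" "closed_ty (arrs [A, TConst k] (TConst k))"
      using True output_typeD[OF A] by (auto simp: \<Gamma>_def closed_ty_def)
    from ftyping_spine[OF less.prems(2) y this]
    have "length (args s) \<le> length [A, TConst k]"
      "TConst k = arrs (drop (length (args s)) [A, TConst k]) (TConst k)"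
      and arg_types_k: "\<forall>i<length (args s). ftyping \<Gamma> (args s ! i) ([A, TConst k] ! i)"
      by blast+
    then have "length (args s) = 2" by (auto simp: le_Suc_eq numeral_2_eq_2)
    then obtain a0 a1 where as: "args s = [a0, a1]" by (auto simp: length_Suc_conv numeral_2_eq_2)
    have "\<Phi> y = Some [A, tyO]" using True by (simp add: \<Phi>_def)
    from O_ctx_Some[OF this sig(1)] ftyping_spine[OF less.prems(3) y]
    have arg_types_O: "\<forall>i<length (args s). ftyping (O_ctx \<Phi>) (args s ! i) ([A, tyO] ! i)"
      by blast
    have "ftyping (O_ctx \<Phi>) a0 A" "ftyping (O_ctx \<Phi>) a1 tyO" "ftyping \<Gamma> a1 (TConst k)"
      using arg_types_O[rule_format, of 0] arg_types_O[rule_format, of 1]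
        arg_types_k[rule_format, of 1] as by simp_all
    moreover have "normal a0" "normal a1" using normal_args[OF less.prems(1)] as by auto
    ultimately have "\<alpha> \<notin> Fv a0" "\<alpha> \<notin> Fv a1"
      using output_type_not_free[OF A _ _ sig(2,1)] less.IH[of a1] size_args_less[of a1 s] as by auto
    then show ?thesis using Fv_head_args[of s] y True as assms(3) by auto
  qed
qed

lemma output_type_tlist:
  assumes A: "output_type A"
  shows "output_type (tlist A)"
proof -
  have T: "tlist A = All (Arr (TVar 0) (Arr (Arr A (Arr (TVar 0) (TVar 0))) (TVar 0)))"
    using A by (simp add: tlist_def lift_closed_ty output_typeD)
  have "\<alpha> \<notin> Fv t" if "normal t" "ftyping [\<alpha> \<mapsto> tyO] t (tlist A)" for t \<alpha>
  proof -
    from that obtain x t1 where t: "t = Lam x t1" "normal t1"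
      and t1_0: "\<And>C. proper C \<Longrightarrow> ftyping ([\<alpha> \<mapsto> tyO](x \<mapsto> tsubst 0 C (TVar 0))) t1
        (tsubst 0 C (Arr (Arr A (Arr (TVar 0) (TVar 0))) (TVar 0)))"
      unfolding T by (rule normal_typing_All_Arr) blast
    have t1: "\<And>C. proper C \<Longrightarrow> ftyping ([\<alpha> \<mapsto> tyO](x \<mapsto> C)) t1 (Arr (Arr A (Arr C C)) C)"
      using t1_0 output_typeD[OF A] by (simp add: tsubst_closed_ty)
    show ?thesis
    proof (cases "x = \<alpha>")
      case False
      let ?\<Phi> = "[\<alpha> \<mapsto> [], x \<mapsto> []]"
      have "closed_proper_sig ?\<Phi>" by (simp add: closed_proper_sig_empty closed_proper_sig_upd)
      moreover have "\<forall>y As. ?\<Phi> y = Some As \<longrightarrow> (\<forall>A\<in>set As. \<not> containsO A)" by simp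
      ultimately obtain c t2 where t2: "t1 = Lam c t2"
        using normal_typing_Arr_is_Lam[OF t(2), of ?\<Phi> "Arr A (Arr tyO tyO)" tyO] t1[of tyO]
        by (auto simp: tyO_def)
      have t2_ty: "\<And>C. proper C \<Longrightarrow> ftyping ([\<alpha> \<mapsto> tyO](x \<mapsto> C, c \<mapsto> Arr A (Arr C C))) t2 C"
        using t1 ftyping_Lam_Arr_inv unfolding t2 by blast
      show ?thesis
      proof (cases "c = \<alpha>")
        case False2: False
        have "normal t2" using t(2) t2 by simp
        then have "\<alpha> \<notin> Fv t2"
          using tlist_body_not_free[OF A, of \<alpha> x c 1 t2] t2_ty[of "TConst 1"] t2_ty[of tyO] False False2
          by (auto simp: tyO_def)
        then show ?thesis using t t2 by simp
      qed (simp add: t t2)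
    qed (simp add: t)
  qed
  moreover have "proper (tlist A)"
    "closed_ty (tlist A)"
    "\<not> containsO (tlist A)"
    using output_typeD[OF A] by (auto simp: T closed_ty_def tyO_def)
  ultimately show ?thesis by (rule output_typeI)
qed

theorem corollary2p1p5:
  assumes "output_type A" and "output_type B"
  shows "output_type (tand A B) \<and> output_type (tor A B) \<and> output_type (tlist A)"
  using assms output_type_tand output_type_tor output_type_tlist by blast

end
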